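(* Let $(\Gamma,\rho)$ be a voltage graph with $\Gamma$ strongly connected and $G$ a finite group. Then for any two vertices $v_i,v_j$ of $\Gamma$, $\mathrm{Net}(v_i,v_j)=\mathrm{Net}^*(v_i,v_j)$.
   Context: $\Gamma=(V,E)$ is a simple digraph, $e_{ij}$ the edge $v_i\to v_j$; a voltage graph is $(\Gamma,\rho)$ with $\rho:E\to G$, $G$ finite with identity $\mathbf 1$. A semi-walk from $v_{i_1}$ to $v_{i_n}$ is $w=v_{i_1}a_1\dots a_{n-1}v_{i_n}$ where each $a_j$ is either $e_{i_ji_{j+1}}$ or $e_{i_{j+1}i_j}$; it is a walk if every $a_j=e_{i_ji_{j+1}}$ (a single vertex is a trivial walk). Net voltage: $f(w)=\bar\rho(a_1)\cdots\bar\rho(a_{n-1})$, $\bar\rho(a_j)=\rho(a_j)$ if $a_j=e_{i_ji_{j+1}}$, else $\rho(a_j)^{-1}$; $f$ of a trivial semi-walk is $\mathbf 1$. $\mathrm{Net}(v_i,v_j)=\{f(w): w$ semi-walk from $v_i$ to $v_j\}$ and $\mathrm{Net}^*(v_i,v_j)=\{f(w): w$ walk from $v_i$ to $v_j\}$. $\Gamma$ is strongly connected if for every ordered pair of distinct vertices there is a walk (path) from the first to the second. *)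

theory Defs
  imports "HOL-Algebra.Group"
begin

definition simple_digraph :: "'v set \<Rightarrow> ('v \<times> 'v) set \<Rightarrow> bool" where
  "simple_digraph V E \<longleftrightarrow> finite V \<and> E \<subseteq> V \<times> V \<and> (\<forall>v. (v, v) \<notin> E)"

definition voltage_graph :: "('a, 'b) monoid_scheme \<Rightarrow> 'v set \<Rightarrow> ('v \<times> 'v) set \<Rightarrow> ('v \<times> 'v \<Rightarrow> 'a) \<Rightarrow> bool" where
  "voltage_graph G V E \<rho> \<longleftrightarrow> group G \<and> simple_digraph V E \<and> (\<forall>e\<in>E. \<rho> e \<in> carrier G)"

text \<open>A semi-walk from u to v is given by its sequence of traversed arcs a_1 ... a_{n-1};
  each entry (True, e) means arc e is traversed forwards, (False, e) backwards.\<close>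
fun semiwalk :: "'v set \<Rightarrow> ('v \<times> 'v) set \<Rightarrow> 'v \<Rightarrow> (bool \<times> ('v \<times> 'v)) list \<Rightarrow> 'v \<Rightarrow> bool" where
  "semiwalk V E u [] v \<longleftrightarrow> u = v \<and> u \<in> V"
| "semiwalk V E u ((fwd, (a, b)) # rest) v \<longleftrightarrow>
     (a, b) \<in> E \<and> (if fwd then a = u \<and> semiwalk V E b rest v else b = u \<and> semiwalk V E a rest v)"

definition walk :: "'v set \<Rightarrow> ('v \<times> 'v) set \<Rightarrow> 'v \<Rightarrow> (bool \<times> ('v \<times> 'v)) list \<Rightarrow> 'v \<Rightarrow> bool" where
  "walk V E u w v \<longleftrightarrow> semiwalk V E u w v \<and> (\<forall>s\<in>set w. fst s)"

fun net_voltage :: "('a, 'b) monoid_scheme \<Rightarrow> ('v \<times> 'v \<Rightarrow> 'a) \<Rightarrow> (bool \<times> ('v \<times> 'v)) list \<Rightarrow> 'a" where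
  "net_voltage G \<rho> [] = \<one>\<^bsub>G\<^esub>"
| "net_voltage G \<rho> ((fwd, e) # rest) =
     (if fwd then \<rho> e else inv\<^bsub>G\<^esub> (\<rho> e)) \<otimes>\<^bsub>G\<^esub> net_voltage G \<rho> rest"

definition Net :: "('a, 'b) monoid_scheme \<Rightarrow> 'v set \<Rightarrow> ('v \<times> 'v) set \<Rightarrow> ('v \<times> 'v \<Rightarrow> 'a) \<Rightarrow> 'v \<Rightarrow> 'v \<Rightarrow> 'a set" where
  "Net G V E \<rho> u v = {net_voltage G \<rho> w | w. semiwalk V E u w v}"

definition Net_star :: "('a, 'b) monoid_scheme \<Rightarrow> 'v set \<Rightarrow> ('v \<times> 'v) set \<Rightarrow> ('v \<times> 'v \<Rightarrow> 'a) \<Rightarrow> 'v \<Rightarrow> 'v \<Rightarrow> 'a set" where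
  "Net_star G V E \<rho> u v = {net_voltage G \<rho> w | w. walk V E u w v}"

definition strongly_connected :: "'v set \<Rightarrow> ('v \<times> 'v) set \<Rightarrow> bool" where
  "strongly_connected V E \<longleftrightarrow> (\<forall>u\<in>V. \<forall>v\<in>V. u \<noteq> v \<longrightarrow> (\<exists>w. walk V E u w v))"

end

theory Submission
  imports Defs "HOL-Algebra.Multiplicative_Group"
begin

text \<open>In a finite group the inverse of an element is one of its positive powers. So a
  backward traversal of an arc \<open>(a, b)\<close> can be imitated by a walk: follow a path \<open>p\<close>
  from \<open>b\<close> to \<open>a\<close> (strong connectivity), then go \<open>ord h - 1\<close> times around the closed
  walk \<open>c = (a, b) p\<close> at \<open>a\<close>, whose voltage is \<open>h = \<rho>(a, b) x\<close> with \<open>x\<close> the voltage of \<open>p\<close>.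
  This walk has voltage \<open>x h\<^sup>-\<^sup>1 = \<rho>(a, b)\<^sup>-\<^sup>1\<close>. Replacing every backward arc of a semi-walk
  in this way yields a walk with the same net voltage.\<close>

lemma (in group) inv_eq_pow_ord_minus_1:
  assumes "finite (carrier G)" and x: "x \<in> carrier G"
  shows "inv x = x [^] (ord x - 1)"
proof (rule inv_equality)
  have "Suc (ord x - 1) = ord x"
    using ord_ge_1[OF assms] by simp
  then have "x [^] (ord x - 1) \<otimes> x = x [^] ord x"
    by (metis nat_pow_Suc)
  then show "x [^] (ord x - 1) \<otimes> x = \<one>"
    using x by simp
qed (use x in simp_all)

lemma net_voltage_Cons:
  "net_voltage G \<rho> (s # w) =
     (if fst s then \<rho> (snd s) else inv\<^bsub>G\<^esub> \<rho> (snd s)) \<otimes>\<^bsub>G\<^esub> net_voltage G \<rho> w"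
  by (cases s) simp

lemma (in group) net_voltage_closed:
  "\<rho> ` snd ` set w \<subseteq> carrier G \<Longrightarrow> net_voltage G \<rho> w \<in> carrier G"
  by (induction w) (auto simp: net_voltage_Cons)

lemma (in group) net_voltage_append:
  assumes "\<rho> ` snd ` set w1 \<subseteq> carrier G" and "\<rho> ` snd ` set w2 \<subseteq> carrier G"
  shows "net_voltage G \<rho> (w1 @ w2) = net_voltage G \<rho> w1 \<otimes> net_voltage G \<rho> w2"
  using assms
  by (induction w1) (auto simp: net_voltage_Cons m_assoc net_voltage_closed)

lemma (in group) net_voltage_concat_replicate:
  assumes "\<rho> ` snd ` set c \<subseteq> carrier G"
  shows "net_voltage G \<rho> (concat (replicate n c)) = net_voltage G \<rho> c [^] n"
proof (induction n)
  case (Suc n)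
  have "set (concat (replicate n c)) \<subseteq> set c"
    by auto
  then have "\<rho> ` snd ` set (concat (replicate n c)) \<subseteq> carrier G"
    using assms by blast
  then have "net_voltage G \<rho> (concat (replicate (Suc n) c)) = net_voltage G \<rho> c \<otimes> net_voltage G \<rho> c [^] n"
    using Suc assms by (simp add: net_voltage_append)
  then show ?case
    by (simp only: nat_pow_Suc2[OF net_voltage_closed[OF assms]])
qed simp

lemma semiwalk_arcs: "semiwalk V E u w v \<Longrightarrow> snd ` set w \<subseteq> E"
  by (induction V E u w v rule: semiwalk.induct) (auto split: if_splits)

lemma walk_arc_image: "walk V E u w v \<Longrightarrow> f ` E \<subseteq> A \<Longrightarrow> f ` snd ` set w \<subseteq> A"
  unfolding walk_def by (metis semiwalk_arcs image_mono order_trans)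

lemma walk_Nil [simp]: "walk V E u [] v \<longleftrightarrow> u = v \<and> u \<in> V"
  by (simp add: walk_def)

lemma walk_Cons_forward [simp]:
  "walk V E u ((True, (a, b)) # w) v \<longleftrightarrow> (a, b) \<in> E \<and> a = u \<and> walk V E b w v"
  by (auto simp: walk_def)

lemma walk_append:
  "walk V E u w1 m \<Longrightarrow> walk V E m w2 v \<Longrightarrow> walk V E u (w1 @ w2) v"
  unfolding walk_def by (induction w1 arbitrary: u) (auto split: if_splits)

lemma walk_concat_replicate:
  "walk V E a c a \<Longrightarrow> a \<in> V \<Longrightarrow> walk V E a (concat (replicate n c)) a"
  by (induction n) (auto intro: walk_append)

lemma (in group) walk_with_inverse_arc_voltage:
  assumes "simple_digraph V E" and \<rho>E: "\<rho> ` E \<subseteq> carrier G"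
    and fin: "finite (carrier G)" and sc: "strongly_connected V E" and e: "(a, b) \<in> E"
  shows "\<exists>r. walk V E b r a \<and> net_voltage G \<rho> r = inv \<rho> (a, b)"
proof -
  have "a \<in> V" "b \<in> V" "a \<noteq> b"
    using assms(1) e by (auto simp: simple_digraph_def)
  then obtain p where p: "walk V E b p a"
    using sc by (metis strongly_connected_def)
  define c where "c = (True, (a, b)) # p"
  define x where "x = net_voltage G \<rho> p"
  define h where "h = \<rho> (a, b) \<otimes> x"
  define r where "r = p @ concat (replicate (ord h - 1) c)"
  have c: "walk V E a c a"
    using p e by (simp add: c_def)
  have \<rho>c: "\<rho> ` snd ` set c \<subseteq> carrier G" and \<rho>p: "\<rho> ` snd ` set p \<subseteq> carrier G"
    using c p \<rho>E by (simp_all add: walk_arc_image)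
  have ab: "\<rho> (a, b) \<in> carrier G" and x: "x \<in> carrier G"
    using \<rho>c \<rho>p by (auto simp: c_def x_def net_voltage_closed)
  have "walk V E b r a"
    unfolding r_def using walk_append[OF p walk_concat_replicate[OF c \<open>a \<in> V\<close>]] .
  have "net_voltage G \<rho> r = x \<otimes> h [^] (ord h - 1)"
    using \<rho>c \<rho>p
    by (auto simp: r_def x_def h_def c_def net_voltage_append net_voltage_concat_replicate)
  also have "\<dots> = x \<otimes> inv (\<rho> (a, b) \<otimes> x)"
    using ab x fin by (simp add: h_def inv_eq_pow_ord_minus_1)
  also have "\<dots> = inv \<rho> (a, b)"
    using ab x by (simp add: inv_mult_group flip: m_assoc)
  finally show ?thesis
    using \<open>walk V E b r a\<close> by blast
qed

lemma (in group) walk_of_semiwalk: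
  assumes "simple_digraph V E" and \<rho>E: "\<rho> ` E \<subseteq> carrier G"
    and "finite (carrier G)" and "strongly_connected V E"
  shows "semiwalk V E u w v \<Longrightarrow> \<exists>w'. walk V E u w' v \<and> net_voltage G \<rho> w' = net_voltage G \<rho> w"
proof (induction w arbitrary: u)
  case Nil
  then show ?case
    by (intro exI[of _ "[]"]) auto
next
  case (Cons s w)
  obtain fwd a b where s: "s = (fwd, (a, b))"
    by (metis prod.exhaust)
  show ?case
  proof (cases fwd)
    case True
    with Cons s obtain w' where "walk V E b w' v" "net_voltage G \<rho> w' = net_voltage G \<rho> w"
      by auto
    with Cons.prems s True show ?thesis
      by (intro exI[of _ "(True, (a, b)) # w'"]) auto
  next
    case False
    with Cons.prems s have e: "(a, b) \<in> E" "b = u"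
      by auto
    from Cons s False obtain w' where w': "walk V E a w' v" "net_voltage G \<rho> w' = net_voltage G \<rho> w"
      by auto
    obtain r where r: "walk V E u r a" "net_voltage G \<rho> r = inv \<rho> (a, b)"
      using walk_with_inverse_arc_voltage[OF assms e(1)] e(2) by blast
    have "net_voltage G \<rho> (r @ w') = inv \<rho> (a, b) \<otimes> net_voltage G \<rho> w"
      using r w' \<rho>E by (simp add: net_voltage_append walk_arc_image)
    with walk_append[OF r(1) w'(1)] False s show ?thesis
      by auto
  qed
qed

theorem theorem1:
  fixes G :: "('a, 'b) monoid_scheme"
    and V :: "'v set" and E :: "('v \<times> 'v) set" and \<rho> :: "'v \<times> 'v \<Rightarrow> 'a"
  assumes "voltage_graph G V E \<rho>"
    and "finite (carrier G)"
    and "strongly_connected V E"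
    and "u \<in> V" and "v \<in> V"
  shows "Net G V E \<rho> u v = Net_star G V E \<rho> u v"
proof
  have grp: "group G" and sd: "simple_digraph V E" and \<rho>E: "\<rho> ` E \<subseteq> carrier G"
    using assms(1) by (auto simp: voltage_graph_def)
  show "Net G V E \<rho> u v \<subseteq> Net_star G V E \<rho> u v"
  proof
    fix g
    assume "g \<in> Net G V E \<rho> u v"
    then obtain w where "semiwalk V E u w v" "g = net_voltage G \<rho> w"
      by (auto simp: Net_def)
    then obtain w' where "walk V E u w' v" "net_voltage G \<rho> w' = g"
      using group.walk_of_semiwalk[OF grp sd \<rho>E assms(2,3)] by metis
    then show "g \<in> Net_star G V E \<rho> u v"
      by (auto simp: Net_star_def)
  qed
  show "Net_star G V E \<rho> u v \<subseteq> Net G V E \<rho> u v"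
    unfolding Net_def Net_star_def walk_def by blast
qed

end
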